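(* Consider the equation $u_{tx}=u-i|u|^2u_x$. Let $k,\Omega,c\in\mathbb{R}$ with $c\neq0$, and let $\varphi,\theta:\mathbb{R}\to\mathbb{R}$ be smooth with $\varphi(y)\neq0$ for all $y$. Suppose $u(x,t)=\varphi(y)e^{i(kx-\Omega t+\theta(y))}$, $y=x-ct$, solves this equation. Then there exist constants $A,B\in\mathbb{R}$ such that $$\theta_y=\frac{\varphi^4-2ck\varphi^2-2\Omega\varphi^2+4A}{4c\varphi^2}$$ and $$\varphi_y^2=-\frac{1}{16c^2}V(\varphi),\qquad V(\varphi)=\frac{\varphi^8+c_3\varphi^6+c_2\varphi^4+c_1\varphi^2+c_0}{\varphi^2},$$ where $c_3=4ck-4\Omega$, $c_2=4\left(c^2k^2+\Omega^2+2A+c(4-2k\Omega)\right)$, $c_1=-32Bc$, $c_0=16A^2$. *)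

theory Defs
  imports "HOL-Analysis.Analysis"
begin

definition smooth_real :: "(real \<Rightarrow> real) \<Rightarrow> bool" where
  "smooth_real f \<longleftrightarrow> (\<forall>n x. ((deriv ^^ n) f) differentiable (at x))"

definition pdx :: "(real \<Rightarrow> real \<Rightarrow> complex) \<Rightarrow> real \<Rightarrow> real \<Rightarrow> complex" where
  "pdx u x t = vector_derivative (\<lambda>s. u s t) (at x)"

definition pdt :: "(real \<Rightarrow> real \<Rightarrow> complex) \<Rightarrow> real \<Rightarrow> real \<Rightarrow> complex" where
  "pdt u x t = vector_derivative (\<lambda>s. u x s) (at t)"

definition pdtx :: "(real \<Rightarrow> real \<Rightarrow> complex) \<Rightarrow> real \<Rightarrow> real \<Rightarrow> complex" where
  "pdtx u x t = pdx (pdt u) x t"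

end

theory Submission imports Defs begin

text \<open>
  Differentiating the
  ansatz (first in t, then in x) and dividing the equation by the unimodular
  factor e^{i(ky + \<theta>(y))} on the line t = 0 gives a complex identity whose real
  and imaginary parts are two ODEs for the amplitude \<phi> and the phase \<theta>:
    (Re)  -c\<phi>'' - (k+\<theta>')\<phi>(-\<Omega> - c\<theta>') = \<phi> + \<phi>^3 (k+\<theta>'),
    (Im)  \<phi>'(-\<Omega> - c\<theta>') - c\<phi>\<theta>'' - c(k+\<theta>')\<phi>' = -\<phi>^2 \<phi>'.
  Multiplying (Im) by \<phi> turns it into an exact derivative, so
  c\<phi>^2\<theta>' - \<phi>^4/4 + (\<Omega>+ck)\<phi>^2/2 is a constant A; this is the formula for \<theta>'.
  Substituting \<theta>' into (Re) and multiplying by \<phi>' gives another exact derivative,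
  whose constant of integration is 2B/c; this is the formula for \<phi>'^2.
\<close>

lemma smooth_real_has_deriv:
  assumes "smooth_real f"
  shows "(f has_real_derivative deriv f z) (at z)"
proof -
  have "((deriv ^^ 0) f) differentiable (at z)"
    using assms unfolding smooth_real_def by blast
  then show ?thesis by (simp add: DERIV_deriv_iff_real_differentiable)
qed

lemma smooth_real_has_deriv2:
  assumes "smooth_real f"
  shows "(deriv f has_real_derivative deriv (deriv f) z) (at z)"
proof -
  have "((deriv ^^ 1) f) differentiable (at z)"
    using assms unfolding smooth_real_def by blast
  then show ?thesis by (simp add: DERIV_deriv_iff_real_differentiable)
qed

lemma has_vector_derivative_exp_i:
  assumes "(Q has_real_derivative Q') (at s)"
  shows "((\<lambda>s. exp (\<i> * complex_of_real (Q s))) has_vector_derivative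
          (\<i> * complex_of_real Q' * exp (\<i> * complex_of_real (Q s)))) (at s)"
proof -
  have "((\<lambda>s. \<i> * complex_of_real (Q s)) has_vector_derivative \<i> * complex_of_real Q') (at s)"
    by (intro derivative_intros assms)
  then have "((exp \<circ> (\<lambda>s. \<i> * complex_of_real (Q s))) has_vector_derivative
          (\<i> * complex_of_real Q' * exp (\<i> * complex_of_real (Q s)))) (at s)"
    by (rule field_vector_diff_chain_at) (rule DERIV_exp)
  then show ?thesis by (simp add: o_def)
qed

text \<open>Derivative of (a + i b) e^{iQ}: the bracket picks up a' + i b' + i Q' (a + i b).
  This single rule computes every partial derivative of the ansatz.\<close>
lemma has_vector_derivative_polar:
  assumes "(a has_real_derivative a') (at s)" "(b has_real_derivative b') (at s)"
    and "(Q has_real_derivative Q') (at s)"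
  shows "((\<lambda>s. (complex_of_real (a s) + \<i> * complex_of_real (b s)) * exp (\<i> * complex_of_real (Q s)))
     has_vector_derivative
     ((complex_of_real a' + \<i> * complex_of_real b'
        + \<i> * complex_of_real Q' * (complex_of_real (a s) + \<i> * complex_of_real (b s)))
       * exp (\<i> * complex_of_real (Q s)))) (at s)"
proof -
  have "((\<lambda>s. (complex_of_real (a s) + \<i> * complex_of_real (b s)) * exp (\<i> * complex_of_real (Q s)))
     has_vector_derivative
     ((complex_of_real (a s) + \<i> * complex_of_real (b s)) * (\<i> * complex_of_real Q' * exp (\<i> * complex_of_real (Q s)))
      + (complex_of_real a' + \<i> * complex_of_real b') * exp (\<i> * complex_of_real (Q s)))) (at s)"
    by (intro has_vector_derivative_mult has_vector_derivative_exp_i assms derivative_intros)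
  then show ?thesis by (simp add: algebra_simps)
qed

locale travelling_wave =
  fixes k \<Omega> c :: real and \<phi> \<theta> :: "real \<Rightarrow> real" and u :: "real \<Rightarrow> real \<Rightarrow> complex"
  assumes smooth_\<phi>: "smooth_real \<phi>" and smooth_\<theta>: "smooth_real \<theta>"
    and u_def: "\<And>x t. u x t = complex_of_real (\<phi> (x - c * t)) *
                   exp (\<i> * complex_of_real (k * x - \<Omega> * t + \<theta> (x - c * t)))"
begin

lemmas \<phi>_deriv = smooth_real_has_deriv[OF smooth_\<phi>]
   and \<phi>'_deriv = smooth_real_has_deriv2[OF smooth_\<phi>]
   and \<theta>_deriv = smooth_real_has_deriv[OF smooth_\<theta>]
   and \<theta>'_deriv = smooth_real_has_deriv2[OF smooth_\<theta>]

lemma pdt_u: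
  "pdt u x t = (complex_of_real (- c * deriv \<phi> (x - c * t))
      + \<i> * complex_of_real (\<phi> (x - c * t) * (- \<Omega> - c * deriv \<theta> (x - c * t))))
    * exp (\<i> * complex_of_real (k * x - \<Omega> * t + \<theta> (x - c * t)))"
proof -
  have u_polar: "(\<lambda>s. u x s) = (\<lambda>s. (complex_of_real (\<phi> (x - c * s)) + \<i> * complex_of_real 0)
        * exp (\<i> * complex_of_real (k * x - \<Omega> * s + \<theta> (x - c * s))))"
    by (simp add: u_def)
  have "((\<lambda>s. u x s) has_vector_derivative
       ((complex_of_real (deriv \<phi> (x - c * t) * (0 - c * 1)) + \<i> * complex_of_real 0
        + \<i> * complex_of_real (0 - \<Omega> * 1 + deriv \<theta> (x - c * t) * (0 - c * 1))
            * (complex_of_real (\<phi> (x - c * t)) + \<i> * complex_of_real 0))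
       * exp (\<i> * complex_of_real (k * x - \<Omega> * t + \<theta> (x - c * t))))) (at t)"
    unfolding u_polar
    by (intro has_vector_derivative_polar DERIV_chain2[OF \<phi>_deriv] DERIV_chain2[OF \<theta>_deriv]
        derivative_intros DERIV_cmult[OF DERIV_ident])
  then show ?thesis unfolding pdt_def
    by (rule vector_derivative_at[THEN trans]) (simp add: algebra_simps)
qed

text \<open>On the line t = 0 the variable y = x, so the values there determine \<phi> and \<theta>
  completely; we record u, u_x, u_tx and |u| along this line.\<close>
lemma u_axis: "u y 0 = complex_of_real (\<phi> y) * exp (\<i> * complex_of_real (k * y + \<theta> y))"
  by (simp add: u_def)

lemma cmod_u_axis: "cmod (u y 0) = \<bar>\<phi> y\<bar>"
  by (simp add: u_def norm_mult)

lemma pdx_u_axis: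
  "pdx u y 0 = (complex_of_real (deriv \<phi> y) + \<i> * complex_of_real (k + deriv \<theta> y) * complex_of_real (\<phi> y))
     * exp (\<i> * complex_of_real (k * y + \<theta> y))"
proof -
  have u_polar: "(\<lambda>s. u s 0) = (\<lambda>s. (complex_of_real (\<phi> s) + \<i> * complex_of_real 0)
        * exp (\<i> * complex_of_real (k * s + \<theta> s)))"
    by (simp add: u_def)
  have "((\<lambda>s. u s 0) has_vector_derivative
     ((complex_of_real (deriv \<phi> y) + \<i> * complex_of_real 0
      + \<i> * complex_of_real (k * 1 + deriv \<theta> y) * (complex_of_real (\<phi> y) + \<i> * complex_of_real 0))
      * exp (\<i> * complex_of_real (k * y + \<theta> y)))) (at y)"
    unfolding u_polar
    by (intro has_vector_derivative_polar \<phi>_deriv \<theta>_deriv derivative_intros DERIV_cmult[OF DERIV_ident])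
  then show ?thesis unfolding pdx_def by (rule vector_derivative_at[THEN trans]) simp
qed

lemma pdtx_u_axis:
  "pdtx u y 0 = (complex_of_real (- c * deriv (deriv \<phi>) y)
      + \<i> * complex_of_real (deriv \<phi> y * (- \<Omega> - c * deriv \<theta> y) - c * \<phi> y * deriv (deriv \<theta>) y)
      + \<i> * complex_of_real (k + deriv \<theta> y) * (complex_of_real (- c * deriv \<phi> y)
          + \<i> * complex_of_real (\<phi> y * (- \<Omega> - c * deriv \<theta> y))))
    * exp (\<i> * complex_of_real (k * y + \<theta> y))"
proof -
  have ut_polar: "(\<lambda>s. pdt u s 0) = (\<lambda>s. (complex_of_real (- c * deriv \<phi> s)
      + \<i> * complex_of_real (\<phi> s * (- \<Omega> - c * deriv \<theta> s))) * exp (\<i> * complex_of_real (k * s + \<theta> s)))"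
    by (simp add: pdt_u)
  have amplitude: "((\<lambda>s. - c * deriv \<phi> s) has_real_derivative - c * deriv (deriv \<phi>) y) (at y)"
    by (intro DERIV_cmult \<phi>'_deriv)
  have phase: "((\<lambda>s. \<phi> s * (- \<Omega> - c * deriv \<theta> s)) has_real_derivative
      deriv \<phi> y * (- \<Omega> - c * deriv \<theta> y) - c * \<phi> y * deriv (deriv \<theta>) y) (at y)"
    by (rule derivative_eq_intros \<phi>_deriv \<theta>'_deriv refl)+ (simp add: algebra_simps)
  have "((\<lambda>s. pdt u s 0) has_vector_derivative
     ((complex_of_real (- c * deriv (deriv \<phi>) y)
      + \<i> * complex_of_real (deriv \<phi> y * (- \<Omega> - c * deriv \<theta> y) - c * \<phi> y * deriv (deriv \<theta>) y)
      + \<i> * complex_of_real (k * 1 + deriv \<theta> y) * (complex_of_real (- c * deriv \<phi> y)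
          + \<i> * complex_of_real (\<phi> y * (- \<Omega> - c * deriv \<theta> y))))
      * exp (\<i> * complex_of_real (k * y + \<theta> y)))) (at y)"
    unfolding ut_polar
    by (intro has_vector_derivative_polar amplitude phase \<theta>_deriv derivative_intros
        DERIV_cmult[OF DERIV_ident])
  then show ?thesis unfolding pdtx_def pdx_def by (rule vector_derivative_at[THEN trans]) simp
qed

end

section \<open>The reduced ODE system\<close>

locale travelling_wave_solution = travelling_wave +
  assumes pde: "\<And>x t. pdtx u x t = u x t - \<i> * complex_of_real ((cmod (u x t))\<^sup>2) * pdx u x t"
begin

text \<open>Dividing the equation on the line t = 0 by the nonzero factor e^{i(ky+\<theta>(y))}
  leaves one complex identity between polynomials in \<phi>, \<theta> and their derivatives.\<close>
lemma reduced_equation: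
  "complex_of_real (- c * deriv (deriv \<phi>) y)
      + \<i> * complex_of_real (deriv \<phi> y * (- \<Omega> - c * deriv \<theta> y) - c * \<phi> y * deriv (deriv \<theta>) y)
      + \<i> * complex_of_real (k + deriv \<theta> y) * (complex_of_real (- c * deriv \<phi> y)
          + \<i> * complex_of_real (\<phi> y * (- \<Omega> - c * deriv \<theta> y)))
   = complex_of_real (\<phi> y) - \<i> * complex_of_real ((\<phi> y)\<^sup>2) *
      (complex_of_real (deriv \<phi> y) + \<i> * complex_of_real (k + deriv \<theta> y) * complex_of_real (\<phi> y))"
  (is "?lhs = ?rhs")
proof -
  let ?E = "exp (\<i> * complex_of_real (k * y + \<theta> y))"
  have "?lhs * ?E = complex_of_real (\<phi> y) * ?E - \<i> * complex_of_real (\<bar>\<phi> y\<bar>\<^sup>2) *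
      ((complex_of_real (deriv \<phi> y) + \<i> * complex_of_real (k + deriv \<theta> y) * complex_of_real (\<phi> y)) * ?E)"
    using pde[of y 0, unfolded cmod_u_axis, unfolded pdtx_u_axis pdx_u_axis u_axis] .
  also have "\<dots> = ?rhs * ?E"
    by (simp add: left_diff_distrib mult.assoc)
  finally show ?thesis by simp
qed

lemma amplitude_ode:
  "- c * deriv (deriv \<phi>) y - (k + deriv \<theta> y) * (\<phi> y * (- \<Omega> - c * deriv \<theta> y))
     = \<phi> y + \<phi> y ^ 3 * (k + deriv \<theta> y)"
  using arg_cong[OF reduced_equation, of Re]
  by (simp add: power2_eq_square power3_eq_cube algebra_simps)

lemma phase_ode:
  "deriv \<phi> y * (- \<Omega> - c * deriv \<theta> y) - c * \<phi> y * deriv (deriv \<theta>) y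
     + (k + deriv \<theta> y) * (- c * deriv \<phi> y) = - (\<phi> y)\<^sup>2 * deriv \<phi> y"
  using arg_cong[OF reduced_equation, of Im]
  by (simp add: power2_eq_square algebra_simps)

end

section \<open>First integrals of the reduced system\<close>

text \<open>Multiplied by \<phi>, the phase equation says that the derivative of
  c\<phi>^2\<theta>' - \<phi>^4/4 + (\<Omega>+ck)\<phi>^2/2 vanishes; its constant value is called A.\<close>
lemma phase_first_integral:
  fixes k \<Omega> c :: real and \<phi> \<theta> :: "real \<Rightarrow> real"
  assumes smooth_\<phi>: "smooth_real \<phi>" and smooth_\<theta>: "smooth_real \<theta>"
    and phase_ode: "\<And>y. deriv \<phi> y * (- \<Omega> - c * deriv \<theta> y) - c * \<phi> y * deriv (deriv \<theta>) y
                        + (k + deriv \<theta> y) * (- c * deriv \<phi> y) = - (\<phi> y)\<^sup>2 * deriv \<phi> y"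
  shows "\<exists>A. \<forall>y. 4 * c * \<phi> y ^ 2 * deriv \<theta> y
                    = \<phi> y ^ 4 - 2 * c * k * \<phi> y ^ 2 - 2 * \<Omega> * \<phi> y ^ 2 + 4 * A"
proof -
  define H where "H y = c * \<phi> y ^ 2 * deriv \<theta> y - \<phi> y ^ 4 / 4 + (\<Omega> + c * k) * \<phi> y ^ 2 / 2" for y
  have H_const: "(H has_real_derivative 0) (at y)" for y
  proof -
    let ?H' = "c * (2 * \<phi> y * deriv \<phi> y * deriv \<theta> y + \<phi> y ^ 2 * deriv (deriv \<theta>) y)
               - \<phi> y ^ 3 * deriv \<phi> y + (\<Omega> + c * k) * \<phi> y * deriv \<phi> y"
    have "(H has_real_derivative ?H') (at y)"
      unfolding H_def[abs_def]
      by (auto intro!: derivative_eq_intros smooth_real_has_deriv[OF smooth_\<phi>]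
          smooth_real_has_deriv[OF smooth_\<theta>] smooth_real_has_deriv2[OF smooth_\<theta>]
          simp: algebra_simps power2_eq_square power3_eq_cube power4_eq_xxxx)
    moreover have "?H' = 0"
      using phase_ode[of y] by algebra
    ultimately show ?thesis by simp
  qed
  have H_y: "H y = H 0" for y
    using DERIV_isconst_all H_const by blast
  show ?thesis
  proof (intro exI allI)
    fix y
    show "4 * c * \<phi> y ^ 2 * deriv \<theta> y = \<phi> y ^ 4 - 2 * c * k * \<phi> y ^ 2 - 2 * \<Omega> * \<phi> y ^ 2 + 4 * H 0"
      using H_y[of y] unfolding H_def[of y] by (simp add: field_simps)
  qed
qed

text \<open>Once \<theta>' is expressed through \<phi>, the amplitude equation multiplied by \<phi>' is an
  exact derivative: \<phi>'^2 + (\<phi>^6 + c_3\<phi>^4 + c_2\<phi>^2 + 16A^2/\<phi>^2)/(16c^2) is constant,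
  and writing that constant as 2B/c gives the potential V.\<close>
lemma amplitude_first_integral:
  fixes k \<Omega> c A :: real and \<phi> \<theta> :: "real \<Rightarrow> real"
  assumes "c \<noteq> 0" and nonzero: "\<And>y. \<phi> y \<noteq> 0" and smooth_\<phi>: "smooth_real \<phi>"
    and amplitude_ode: "\<And>y. - c * deriv (deriv \<phi>) y - (k + deriv \<theta> y) * (\<phi> y * (- \<Omega> - c * deriv \<theta> y))
                              = \<phi> y + \<phi> y ^ 3 * (k + deriv \<theta> y)"
    and phase: "\<And>y. 4 * c * \<phi> y ^ 2 * deriv \<theta> y
                      = \<phi> y ^ 4 - 2 * c * k * \<phi> y ^ 2 - 2 * \<Omega> * \<phi> y ^ 2 + 4 * A"
  shows "\<exists>B. \<forall>y. (deriv \<phi> y)\<^sup>2 = - (1 / (16 * c\<^sup>2)) *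
             ((\<phi> y ^ 8 + (4 * c * k - 4 * \<Omega>) * \<phi> y ^ 6
               + 4 * (c\<^sup>2 * k\<^sup>2 + \<Omega>\<^sup>2 + 2 * A + c * (4 - 2 * k * \<Omega>)) * \<phi> y ^ 4
               + (- 32 * B * c) * \<phi> y ^ 2 + 16 * A\<^sup>2) / \<phi> y ^ 2)"
proof -
  define c3 where "c3 = 4 * c * k - 4 * \<Omega>"
  define c2 where "c2 = 4 * (c\<^sup>2 * k\<^sup>2 + \<Omega>\<^sup>2 + 2 * A + c * (4 - 2 * k * \<Omega>))"
  define K where "K y = (deriv \<phi> y)\<^sup>2
      + (\<phi> y ^ 6 + c3 * \<phi> y ^ 4 + c2 * \<phi> y ^ 2 + 16 * A\<^sup>2 / \<phi> y ^ 2) / (16 * c\<^sup>2)" for y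
  have K_const: "(K has_real_derivative 0) (at y)" for y
  proof -
    let ?K' = "2 * deriv \<phi> y * deriv (deriv \<phi>) y
      + (6 * \<phi> y ^ 5 * deriv \<phi> y + 4 * c3 * \<phi> y ^ 3 * deriv \<phi> y + 2 * c2 * \<phi> y * deriv \<phi> y
         - 32 * A\<^sup>2 * deriv \<phi> y / \<phi> y ^ 3) / (16 * c\<^sup>2)"
    have "(K has_real_derivative ?K') (at y)"
      unfolding K_def[abs_def] using \<open>c \<noteq> 0\<close> nonzero[of y]
      by (auto intro!: derivative_eq_intros smooth_real_has_deriv[OF smooth_\<phi>]
          smooth_real_has_deriv2[OF smooth_\<phi>] simp: field_simps power2_eq_square power3_eq_cube)
    moreover have "?K' = 0"
    proof -
      text \<open>Cleared of denominators, this is the amplitude equation times 32c\<phi>^3\<phi>',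
        with c\<theta>' eliminated by the phase relation.\<close>
      have "32 * c\<^sup>2 * \<phi> y ^ 3 * deriv \<phi> y * deriv (deriv \<phi>) y
          + (6 * \<phi> y ^ 8 * deriv \<phi> y + 4 * c3 * \<phi> y ^ 6 * deriv \<phi> y + 2 * c2 * \<phi> y ^ 4 * deriv \<phi> y
             - 32 * A\<^sup>2 * deriv \<phi> y) = 0"
        using amplitude_ode[of y] phase[of y] unfolding c2_def c3_def by algebra
      then show ?thesis
        using \<open>c \<noteq> 0\<close> nonzero[of y] by (simp add: field_simps eval_nat_numeral)
    qed
    ultimately show ?thesis by simp
  qed
  define B where "B = c * K 0 / 2"
  have K_B: "K y = 2 * B / c" for y
    unfolding B_def using DERIV_isconst_all[OF allI[OF K_const]] \<open>c \<noteq> 0\<close> by simp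
  show ?thesis
  proof (intro exI allI)
    fix y
    show "(deriv \<phi> y)\<^sup>2 = - (1 / (16 * c\<^sup>2)) *
             ((\<phi> y ^ 8 + (4 * c * k - 4 * \<Omega>) * \<phi> y ^ 6
               + 4 * (c\<^sup>2 * k\<^sup>2 + \<Omega>\<^sup>2 + 2 * A + c * (4 - 2 * k * \<Omega>)) * \<phi> y ^ 4
               + (- 32 * B * c) * \<phi> y ^ 2 + 16 * A\<^sup>2) / \<phi> y ^ 2)"
      (is "_ = - (1 / (16 * c\<^sup>2)) * (?V / \<phi> y ^ 2)")
    proof -
      have "(deriv \<phi> y)\<^sup>2 = 2 * B / c
          - (\<phi> y ^ 6 + c3 * \<phi> y ^ 4 + c2 * \<phi> y ^ 2 + 16 * A\<^sup>2 / \<phi> y ^ 2) / (16 * c\<^sup>2)"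
        using K_B[of y] unfolding K_def by simp
      also have "\<dots> = - (1 / (16 * c\<^sup>2)) * (?V / \<phi> y ^ 2)"
        using \<open>c \<noteq> 0\<close> nonzero[of y] unfolding c2_def c3_def
        by (simp add: field_simps eval_nat_numeral)
      finally show ?thesis .
    qed
  qed
qed

theorem mainTheorem4:
  fixes k \<Omega> c :: real and \<phi> \<theta> :: "real \<Rightarrow> real" and u :: "real \<Rightarrow> real \<Rightarrow> complex"
  assumes "c \<noteq> 0"
    and "smooth_real \<phi>" and "smooth_real \<theta>"
    and "\<And>y. \<phi> y \<noteq> 0"
    and u_def: "\<And>x t. u x t = complex_of_real (\<phi> (x - c * t)) *
                   exp (\<i> * complex_of_real (k * x - \<Omega> * t + \<theta> (x - c * t)))"
    and eq: "\<And>x t. pdtx u x t = u x t - \<i> * complex_of_real ((cmod (u x t))\<^sup>2) * pdx u x t"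
  shows "\<exists>A B :: real. \<forall>y.
           deriv \<theta> y = (\<phi> y ^ 4 - 2 * c * k * \<phi> y ^ 2 - 2 * \<Omega> * \<phi> y ^ 2 + 4 * A) / (4 * c * \<phi> y ^ 2)
         \<and> (deriv \<phi> y)\<^sup>2 = - (1 / (16 * c\<^sup>2)) *
             ((\<phi> y ^ 8 + (4 * c * k - 4 * \<Omega>) * \<phi> y ^ 6
               + 4 * (c\<^sup>2 * k\<^sup>2 + \<Omega>\<^sup>2 + 2 * A + c * (4 - 2 * k * \<Omega>)) * \<phi> y ^ 4
               + (- 32 * B * c) * \<phi> y ^ 2 + 16 * A\<^sup>2) / \<phi> y ^ 2)"
proof -
  interpret travelling_wave_solution k \<Omega> c \<phi> \<theta> u
    by unfold_locales (use assms in auto)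
  obtain A where phase: "\<And>y. 4 * c * \<phi> y ^ 2 * deriv \<theta> y
                      = \<phi> y ^ 4 - 2 * c * k * \<phi> y ^ 2 - 2 * \<Omega> * \<phi> y ^ 2 + 4 * A"
    using phase_first_integral[OF smooth_\<phi> smooth_\<theta> phase_ode] by blast
  have theta_formula: "deriv \<theta> y = (\<phi> y ^ 4 - 2 * c * k * \<phi> y ^ 2 - 2 * \<Omega> * \<phi> y ^ 2 + 4 * A)
                                    / (4 * c * \<phi> y ^ 2)" for y
    using phase[of y] \<open>c \<noteq> 0\<close> \<open>\<phi> y \<noteq> 0\<close> by (simp add: field_simps)
  show ?thesis
    using theta_formula amplitude_first_integral[OF \<open>c \<noteq> 0\<close> assms(4) smooth_\<phi> amplitude_ode phase]
    by blast
qed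

end
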